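(* Let $I\subset\mathbb{R}$ be an interval and let $K,M,N\colon I^2\to I$ be arbitrary means. Then $K$ is the unique $(M,N)$-invariant mean if and only if the sequence of iterates $\big((M,N)^n\big)_{n\in\mathbb{N}}$ converges to $(K,K)$ pointwise on $I^2$.
   Context: A function $K\colon I^2\to\mathbb{R}$ is a mean in $I$ if $\min(x,y)\le K(x,y)\le\max(x,y)$ for all $x,y\in I$; no continuity is assumed. $(M,N)^n$ denotes the $n$-th iterate of the map $(x,y)\mapsto(M(x,y),N(x,y))$. A mean $K$ is $(M,N)$-invariant if $K(M(x,y),N(x,y))=K(x,y)$ for all $x,y\in I$. *)

theory Defs
  imports "HOL-Analysis.Analysis"
begin

definition is_mean :: "real set \<Rightarrow> (real \<Rightarrow> real \<Rightarrow> real) \<Rightarrow> bool" where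
  "is_mean I K \<longleftrightarrow> (\<forall>x\<in>I. \<forall>y\<in>I. min x y \<le> K x y \<and> K x y \<le> max x y)"

definition mean_iter :: "(real \<Rightarrow> real \<Rightarrow> real) \<Rightarrow> (real \<Rightarrow> real \<Rightarrow> real) \<Rightarrow> nat
    \<Rightarrow> real \<times> real \<Rightarrow> real \<times> real" where
  "mean_iter M N n = ((\<lambda>(x, y). (M x y, N x y)) ^^ n)"

definition invariant_mean :: "real set \<Rightarrow> (real \<Rightarrow> real \<Rightarrow> real) \<Rightarrow> (real \<Rightarrow> real \<Rightarrow> real)
    \<Rightarrow> (real \<Rightarrow> real \<Rightarrow> real) \<Rightarrow> bool" where
  "invariant_mean I M N K \<longleftrightarrow> (\<forall>x\<in>I. \<forall>y\<in>I. K (M x y) (N x y) = K x y)"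

end

theory Submission
  imports Defs
begin

text \<open>The minimum of the two coordinates increases and the maximum decreases along an orbit, so
both converge; since the orbit of \<open>(M x y, N x y)\<close> is that of \<open>(x, y)\<close> shifted by one, their limits
are again invariant means. If \<open>K\<close> is the only invariant mean, both limits equal \<open>K\<close> and squeeze the
coordinates. Conversely, the same shift makes the limit \<open>K\<close> invariant, and an invariant mean \<open>L\<close>
is constant along the orbit while lying between the two coordinates, so \<open>L = K\<close>.\<close>

lemma mean_iter_0 [simp]: "mean_iter M N 0 p = p"
  by (simp add: mean_iter_def)

lemma mean_iter_Suc_right: "mean_iter M N (Suc n) (x, y) = mean_iter M N n (M x y, N x y)"
  by (simp add: mean_iter_def funpow_Suc_right del: funpow.simps)

lemma mean_iter_Suc: "mean_iter M N (Suc n) p = (case mean_iter M N n p of (a, b) \<Rightarrow> (M a b, N a b))"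
  by (simp add: mean_iter_def)

lemma is_meanD:
  assumes "is_mean I M" "x \<in> I" "y \<in> I"
  shows "min x y \<le> M x y" "M x y \<le> max x y"
  using assms unfolding is_mean_def by auto

lemma mean_in_interval:
  assumes "is_interval I" "is_mean I M" "x \<in> I" "y \<in> I"
  shows "M x y \<in> I"
proof -
  have "min x y \<in> I" "max x y \<in> I"
    using assms(3,4) by (auto simp: min_def max_def)
  with assms(1) is_meanD[OF assms(2-4)] show ?thesis
    unfolding is_interval_1 by blast
qed

lemma mean_iter_in_interval:
  assumes "is_interval I" "is_mean I M" "is_mean I N" "x \<in> I" "y \<in> I"
  shows "mean_iter M N n (x, y) \<in> I \<times> I"
proof (induction n)
  case 0
  then show ?case using assms(4,5) by simp
next
  case (Suc n)
  then show ?case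
    using mean_in_interval[OF assms(1,2)] mean_in_interval[OF assms(1,3)]
    by (auto simp: mean_iter_Suc split: prod.split)
qed

lemma
  assumes "is_interval I" "is_mean I M" "is_mean I N" "x \<in> I" "y \<in> I"
  shows incseq_mean_iter_min: "incseq (\<lambda>n. case_prod min (mean_iter M N n (x, y)))"
    and decseq_mean_iter_max: "decseq (\<lambda>n. case_prod max (mean_iter M N n (x, y)))"
proof -
  have "case_prod min (mean_iter M N n (x, y)) \<le> case_prod min (mean_iter M N (Suc n) (x, y)) \<and>
        case_prod max (mean_iter M N (Suc n) (x, y)) \<le> case_prod max (mean_iter M N n (x, y))" for n
  proof -
    obtain a b where ab: "mean_iter M N n (x, y) = (a, b)" "a \<in> I" "b \<in> I"
      using mean_iter_in_interval[OF assms, of n] by auto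
    show ?thesis
      using is_meanD[OF assms(2) ab(2,3)] is_meanD[OF assms(3) ab(2,3)]
      by (simp add: mean_iter_Suc ab(1))
  qed
  then show "incseq (\<lambda>n. case_prod min (mean_iter M N n (x, y)))"
    and "decseq (\<lambda>n. case_prod max (mean_iter M N n (x, y)))"
    by (auto intro: incseq_SucI decseq_SucI)
qed

lemma mean_iter_min_max_bounds:
  assumes "is_interval I" "is_mean I M" "is_mean I N" "x \<in> I" "y \<in> I"
  shows "case_prod min (mean_iter M N n (x, y)) \<in> {min x y..max x y}"
    and "case_prod max (mean_iter M N n (x, y)) \<in> {min x y..max x y}"
proof -
  have "min x y \<le> case_prod min (mean_iter M N n (x, y))"
       "case_prod max (mean_iter M N n (x, y)) \<le> max x y"
    using incseqD[OF incseq_mean_iter_min[OF assms], of 0 n]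
      decseqD[OF decseq_mean_iter_max[OF assms], of 0 n] by simp_all
  moreover have "case_prod min (mean_iter M N n (x, y)) \<le> case_prod max (mean_iter M N n (x, y))"
    by (simp add: case_prod_beta)
  ultimately show "case_prod min (mean_iter M N n (x, y)) \<in> {min x y..max x y}"
    and "case_prod max (mean_iter M N n (x, y)) \<in> {min x y..max x y}"
    by auto
qed

lemma mean_iter_min_tendsto_SUP:
  assumes "is_interval I" "is_mean I M" "is_mean I N" "x \<in> I" "y \<in> I"
  shows "(\<lambda>n. case_prod min (mean_iter M N n (x, y)))
    \<longlonglongrightarrow> (SUP n. case_prod min (mean_iter M N n (x, y)))"
proof (rule LIMSEQ_incseq_SUP[OF _ incseq_mean_iter_min[OF assms]])
  show "bdd_above (range (\<lambda>n. case_prod min (mean_iter M N n (x, y))))"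
    using mean_iter_min_max_bounds(1)[OF assms] by (auto intro!: bdd_aboveI[where M = "max x y"])
qed

lemma mean_iter_max_tendsto_INF:
  assumes "is_interval I" "is_mean I M" "is_mean I N" "x \<in> I" "y \<in> I"
  shows "(\<lambda>n. case_prod max (mean_iter M N n (x, y)))
    \<longlonglongrightarrow> (INF n. case_prod max (mean_iter M N n (x, y)))"
proof (rule LIMSEQ_decseq_INF[OF _ decseq_mean_iter_max[OF assms]])
  show "bdd_below (range (\<lambda>n. case_prod max (mean_iter M N n (x, y))))"
    using mean_iter_min_max_bounds(2)[OF assms] by (auto intro!: bdd_belowI[where m = "min x y"])
qed

lemma invariant_mean_along_orbit:
  assumes "is_interval I" "is_mean I M" "is_mean I N" "invariant_mean I M N L" "x \<in> I" "y \<in> I"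
  shows "case_prod L (mean_iter M N n (x, y)) = L x y"
proof (induction n)
  case (Suc n)
  obtain a b where ab: "mean_iter M N n (x, y) = (a, b)" "a \<in> I" "b \<in> I"
    using mean_iter_in_interval[OF assms(1-3,5,6), of n] by auto
  then show ?case
    using Suc assms(4) by (simp add: mean_iter_Suc invariant_mean_def)
qed simp

lemma invariant_mean_of_orbit_limit:
  fixes f :: "real \<times> real \<Rightarrow> real"
  assumes "is_interval I" "is_mean I M" "is_mean I N"
    and lim: "\<And>x y. x \<in> I \<Longrightarrow> y \<in> I \<Longrightarrow> (\<lambda>n. f (mean_iter M N n (x, y))) \<longlonglongrightarrow> L x y"
  shows "invariant_mean I M N L"
  unfolding invariant_mean_def
proof (intro ballI)
  fix x y assume xy: "x \<in> I" "y \<in> I"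
  have "(\<lambda>n. f (mean_iter M N n (M x y, N x y))) \<longlonglongrightarrow> L x y"
    using LIMSEQ_Suc[OF lim[OF xy]] by (simp add: mean_iter_Suc_right)
  moreover have "(\<lambda>n. f (mean_iter M N n (M x y, N x y))) \<longlonglongrightarrow> L (M x y) (N x y)"
    using lim mean_in_interval[OF assms(1,2) xy] mean_in_interval[OF assms(1,3) xy] by blast
  ultimately show "L (M x y) (N x y) = L x y"
    using LIMSEQ_unique by blast
qed

lemma is_mean_of_orbit_limit:
  fixes f :: "real \<times> real \<Rightarrow> real"
  assumes bounds: "\<And>x y n. x \<in> I \<Longrightarrow> y \<in> I \<Longrightarrow> f (mean_iter M N n (x, y)) \<in> {min x y..max x y}"
    and lim: "\<And>x y. x \<in> I \<Longrightarrow> y \<in> I \<Longrightarrow> (\<lambda>n. f (mean_iter M N n (x, y))) \<longlonglongrightarrow> L x y"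
  shows "is_mean I L"
  unfolding is_mean_def
proof (intro ballI)
  fix x y assume xy: "x \<in> I" "y \<in> I"
  show "min x y \<le> L x y \<and> L x y \<le> max x y"
    using bounds[OF xy] by (auto intro!: LIMSEQ_le_const[OF lim[OF xy]] LIMSEQ_le_const2[OF lim[OF xy]])
qed

lemma tendsto_diagonal_iff_min_max:
  fixes p :: "nat \<Rightarrow> real \<times> real"
  shows "p \<longlonglongrightarrow> (c, c) \<longleftrightarrow>
    (\<lambda>n. case_prod min (p n)) \<longlonglongrightarrow> c \<and> (\<lambda>n. case_prod max (p n)) \<longlonglongrightarrow> c"
proof
  assume "p \<longlonglongrightarrow> (c, c)"
  then have "(\<lambda>n. fst (p n)) \<longlonglongrightarrow> c" "(\<lambda>n. snd (p n)) \<longlonglongrightarrow> c"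
    using tendsto_fst tendsto_snd by fastforce+
  then show "(\<lambda>n. case_prod min (p n)) \<longlonglongrightarrow> c \<and> (\<lambda>n. case_prod max (p n)) \<longlonglongrightarrow> c"
    unfolding case_prod_beta using tendsto_min tendsto_max by fastforce
next
  assume lim: "(\<lambda>n. case_prod min (p n)) \<longlonglongrightarrow> c \<and> (\<lambda>n. case_prod max (p n)) \<longlonglongrightarrow> c"
  have "(\<lambda>n. fst (p n)) \<longlonglongrightarrow> c" "(\<lambda>n. snd (p n)) \<longlonglongrightarrow> c"
    by (rule tendsto_sandwich[of "\<lambda>n. case_prod min (p n)" _ _ "\<lambda>n. case_prod max (p n)"];
        use lim in \<open>auto simp: case_prod_beta\<close>)+
  then show "p \<longlonglongrightarrow> (c, c)"
    using tendsto_Pair by fastforce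
qed

lemma invariant_mean_eq_orbit_limit:
  assumes "is_interval I" "is_mean I M" "is_mean I N" "is_mean I L" "invariant_mean I M N L"
    and xy: "x \<in> I" "y \<in> I"
    and lim: "(\<lambda>n. mean_iter M N n (x, y)) \<longlonglongrightarrow> (c, c)"
  shows "L x y = c"
proof -
  have L_between: "case_prod min (mean_iter M N n (x, y)) \<le> L x y \<and>
                   L x y \<le> case_prod max (mean_iter M N n (x, y))" for n
  proof -
    obtain a b where ab: "mean_iter M N n (x, y) = (a, b)" "a \<in> I" "b \<in> I"
      using mean_iter_in_interval[OF assms(1-3) xy, of n] by auto
    show ?thesis
      using is_meanD[OF assms(4) ab(2,3)] invariant_mean_along_orbit[OF assms(1-3,5) xy, of n]
      by (simp add: ab(1))
  qed
  from lim have "(\<lambda>n. case_prod min (mean_iter M N n (x, y))) \<longlonglongrightarrow> c"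
      and "(\<lambda>n. case_prod max (mean_iter M N n (x, y))) \<longlonglongrightarrow> c"
    by (simp_all add: tendsto_diagonal_iff_min_max)
  then have "(\<lambda>n. L x y) \<longlonglongrightarrow> c"
    by (rule tendsto_sandwich[rotated 2]) (use L_between in auto)
  then show ?thesis
    using LIMSEQ_const_iff by blast
qed

lemma
  assumes "is_interval I" "is_mean I M" "is_mean I N"
  shows invariant_mean_SUP_mean_iter_min:
      "is_mean I (\<lambda>x y. SUP n. case_prod min (mean_iter M N n (x, y))) \<and>
       invariant_mean I M N (\<lambda>x y. SUP n. case_prod min (mean_iter M N n (x, y)))"
    and invariant_mean_INF_mean_iter_max:
      "is_mean I (\<lambda>x y. INF n. case_prod max (mean_iter M N n (x, y))) \<and>
       invariant_mean I M N (\<lambda>x y. INF n. case_prod max (mean_iter M N n (x, y)))"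
  using is_mean_of_orbit_limit[OF mean_iter_min_max_bounds(1)[OF assms] mean_iter_min_tendsto_SUP[OF assms]]
    invariant_mean_of_orbit_limit[OF assms mean_iter_min_tendsto_SUP[OF assms]]
    is_mean_of_orbit_limit[OF mean_iter_min_max_bounds(2)[OF assms] mean_iter_max_tendsto_INF[OF assms]]
    invariant_mean_of_orbit_limit[OF assms mean_iter_max_tendsto_INF[OF assms]]
  by blast+

theorem mainTheorem4:
  fixes I :: "real set" and K M N :: "real \<Rightarrow> real \<Rightarrow> real"
  assumes "is_interval I"
    and "is_mean I K" and "is_mean I M" and "is_mean I N"
  shows "(invariant_mean I M N K \<and>
          (\<forall>L. is_mean I L \<and> invariant_mean I M N L \<longrightarrow> (\<forall>x\<in>I. \<forall>y\<in>I. L x y = K x y)))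
     \<longleftrightarrow> (\<forall>x\<in>I. \<forall>y\<in>I. (\<lambda>n. mean_iter M N n (x, y)) \<longlonglongrightarrow> (K x y, K x y))"
proof
  assume unique: "invariant_mean I M N K \<and>
    (\<forall>L. is_mean I L \<and> invariant_mean I M N L \<longrightarrow> (\<forall>x\<in>I. \<forall>y\<in>I. L x y = K x y))"
  show "\<forall>x\<in>I. \<forall>y\<in>I. (\<lambda>n. mean_iter M N n (x, y)) \<longlonglongrightarrow> (K x y, K x y)"
  proof (intro ballI)
    fix x y assume xy: "x \<in> I" "y \<in> I"
    have "(SUP n. case_prod min (mean_iter M N n (x, y))) = K x y"
      and "(INF n. case_prod max (mean_iter M N n (x, y))) = K x y"
      using unique xy invariant_mean_SUP_mean_iter_min[OF assms(1,3,4)]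
        invariant_mean_INF_mean_iter_max[OF assms(1,3,4)] by blast+
    then show "(\<lambda>n. mean_iter M N n (x, y)) \<longlonglongrightarrow> (K x y, K x y)"
      using mean_iter_min_tendsto_SUP[OF assms(1,3,4) xy] mean_iter_max_tendsto_INF[OF assms(1,3,4) xy]
      by (simp add: tendsto_diagonal_iff_min_max)
  qed
next
  assume lim: "\<forall>x\<in>I. \<forall>y\<in>I. (\<lambda>n. mean_iter M N n (x, y)) \<longlonglongrightarrow> (K x y, K x y)"
  then have "invariant_mean I M N K"
    using invariant_mean_of_orbit_limit[OF assms(1,3,4), of fst K] tendsto_fst by fastforce
  moreover have "L x y = K x y" if "is_mean I L" "invariant_mean I M N L" "x \<in> I" "y \<in> I" for L x y
    using invariant_mean_eq_orbit_limit[OF assms(1,3,4) that] lim that(3,4) by blast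
  ultimately show "invariant_mean I M N K \<and>
    (\<forall>L. is_mean I L \<and> invariant_mean I M N L \<longrightarrow> (\<forall>x\<in>I. \<forall>y\<in>I. L x y = K x y))"
    by blast
qed

end
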